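(* Let $(\Delta X)_X$ be a quasi-regular family and let $A$ be a $\Delta$-regular algebra with structure map $\beta:\mathrm{FT}\,A\to A$. Extend $\beta$ to $\Delta A$ by $$\beta(t)=\bigvee\{\beta(s)\;:\; s\ll t\}\qquad (t\in\Delta A)$$ (these suprema exist because the sets involved are $\Delta$-sets; on finite terms this agrees with the original $\beta$). Then $(A,\beta)$ with $\beta:\Delta A\to A$ is an Eilenberg–Moore algebra for the monad $(\Delta,\mu,\eta)$; that is, $\beta(\eta_A(a))=a$ for all $a\in A$, and $\beta\circ\mu_A=\beta\circ\Delta\beta$ as maps $\Delta(\Delta A)\to A$; equivalently, for every $t(s_i\mid i\in I)\in\Delta(\Delta A)$ with $s_i\in \Delta A$, $\beta(t(s_i\mid i\in I))=\beta(t(\beta(s_i)\mid i\in I))$, where on the left the term of terms is flattened into a term over $A$.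
   Context: Fix a ranked alphabet $\Sigma$. An ordered $\Sigma$-algebra is a $\Sigma$-algebra $A$ with a partial order $\le$ having a least element $\bot^A$ such that every operation is monotone. $\mathrm{FT}\,X$ denotes the finite partial $\Sigma$-terms over a set $X$ (finite trees with internal nodes labeled by symbols of $\Sigma$ of matching arity, leaves labeled by constants or elements of $X$, and possibly missing subterms, written $\bot$), and $\mathrm{CT}\,X$ the partial $\Sigma$-coterms (finite or infinite such trees), ordered by extension of partial trees; $\mathrm{CT}\,X$ is the free $\omega$-continuous algebra on $X$ (countable directed sups exist and operations preserve them; morphisms are strict monotone operation-preserving maps preserving countable directed sups). A quasi-regular family is a family $(\Delta X)_X$, indexed by all sets, with each $\Delta X$ an ordered $\Sigma$-subalgebra of $\mathrm{CT}\,X$ containing $X$, such that every morphism $h:\mathrm{CT}\,X\to\mathrm{CT}\,Y$ of $\omega$-continuous algebras with $h(X)\subseteq\Delta Y$ satisfies $h(\Delta X)\subseteq \Delta Y$. Then $\Delta$ is a monad on sets (a submonad of the coterm monad): $\eta_X:X\to\Delta X$ sends $x$ to the one-node term $x$; for $g:X\to Y$, $\Delta g:\Delta X\to\Delta Y$ relabels leaves by $g$; $\mu_X:\Delta(\Delta X)\to\Delta X$ substitutes, at each leaf, the term labeling it and flattens. For an ordered algebra $A$, its structure map $\beta:\mathrm{FT}\,A\to A$ evaluates finite partial terms over $A$ in $A$ (leaf $a\mapsto a$, $\bot\mapsto\bot^A$). For $t_1,t_2\in\mathrm{CT}\,X$, write $t_1\ll t_2$ if $t_1\in\mathrm{FT}\,X$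 and $t_1$ is obtained from $t_2$ by deleting subterms (i.e. agrees with $t_2$ as a labeled tree wherever $t_1$ is defined). A subset $B\subseteq A$ is a $\Delta$-set if $B=\{\beta(s):s\ll t\}$ for some $t\in\Delta A$ (such a set is countable and directed). $A$ is a $\Delta$-regular algebra if every $\Delta$-set in $A$ has a supremum and the operations preserve suprema of $\Delta$-sets, i.e. for $f\in\Sigma_n$ and $\Delta$-sets $B_1,\dots,B_n$, $f^A(\bigvee B_1,\dots,\bigvee B_n)=\bigvee\{f^A(b_1,\dots,b_n): b_i\in B_i\}$. *)

theory Defs
  imports Main "HOL-Library.Countable_Set"
begin

text \<open>A partial (co)term over variables 'x is a partial map from positions (nat lists)
  to labels; an undefined position means a missing subterm (bottom).\<close>

datatype ('f, 'x) lab = Sym 'f | Var 'x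

type_synonym ('f, 'x) tree = "nat list \<Rightarrow> ('f, 'x) lab option"

definition wf_tree :: "('f \<Rightarrow> nat) \<Rightarrow> ('f, 'x) tree \<Rightarrow> bool" where
  "wf_tree ar t \<longleftrightarrow>
     (\<forall>p i. t (p @ [i]) \<noteq> None \<longrightarrow> (\<exists>f. t p = Some (Sym f) \<and> i < ar f))"

definition CT :: "('f \<Rightarrow> nat) \<Rightarrow> 'x set \<Rightarrow> ('f, 'x) tree set" where
  "CT ar X = {t. wf_tree ar t \<and> (\<forall>p x. t p = Some (Var x) \<longrightarrow> x \<in> X)}"

definition FT :: "('f \<Rightarrow> nat) \<Rightarrow> 'x set \<Rightarrow> ('f, 'x) tree set" where
  "FT ar X = {t \<in> CT ar X. finite (dom t)}"

text \<open>The order of CT X is extension of partial trees, i.e. map_le.\<close>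

definition bot_tree :: "('f, 'x) tree" where
  "bot_tree = (\<lambda>p. None)"

definition leaf :: "'x \<Rightarrow> ('f, 'x) tree" where
  "leaf x = (\<lambda>p. if p = [] then Some (Var x) else None)"

definition node :: "('f \<Rightarrow> nat) \<Rightarrow> 'f \<Rightarrow> ('f, 'x) tree list \<Rightarrow> ('f, 'x) tree" where
  "node ar f ts = (\<lambda>p. case p of [] \<Rightarrow> Some (Sym f)
                    | i # q \<Rightarrow> if i < ar f then (ts ! i) q else None)"

definition approx :: "('f \<Rightarrow> nat) \<Rightarrow> ('f, 'x) tree \<Rightarrow> ('f, 'x) tree \<Rightarrow> bool" where
  "approx ar t1 t2 \<longleftrightarrow> wf_tree ar t1 \<and> finite (dom t1) \<and> t1 \<subseteq>\<^sub>m t2"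

definition is_lub_on :: "('b \<Rightarrow> 'b \<Rightarrow> bool) \<Rightarrow> 'b set \<Rightarrow> 'b set \<Rightarrow> 'b \<Rightarrow> bool" where
  "is_lub_on le S B s \<longleftrightarrow> s \<in> S \<and> (\<forall>b\<in>B. le b s) \<and>
     (\<forall>u\<in>S. (\<forall>b\<in>B. le b u) \<longrightarrow> le s u)"

definition directed_on :: "('b \<Rightarrow> 'b \<Rightarrow> bool) \<Rightarrow> 'b set \<Rightarrow> bool" where
  "directed_on le D \<longleftrightarrow> D \<noteq> {} \<and> (\<forall>a\<in>D. \<forall>b\<in>D. \<exists>c\<in>D. le a c \<and> le b c)"

definition cont_morphism ::
  "('f \<Rightarrow> nat) \<Rightarrow> 'x set \<Rightarrow> 'y set \<Rightarrow> (('f, 'x) tree \<Rightarrow> ('f, 'y) tree) \<Rightarrow> bool" where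
  "cont_morphism ar X Y h \<longleftrightarrow>
     (\<forall>t\<in>CT ar X. h t \<in> CT ar Y) \<and>
     h bot_tree = bot_tree \<and>
     (\<forall>t1\<in>CT ar X. \<forall>t2\<in>CT ar X. t1 \<subseteq>\<^sub>m t2 \<longrightarrow> h t1 \<subseteq>\<^sub>m h t2) \<and>
     (\<forall>f ts. length ts = ar f \<and> set ts \<subseteq> CT ar X \<longrightarrow> h (node ar f ts) = node ar f (map h ts)) \<and>
     (\<forall>D s. D \<subseteq> CT ar X \<and> countable D \<and> directed_on (\<subseteq>\<^sub>m) D \<and>
            is_lub_on (\<subseteq>\<^sub>m) (CT ar X) D s \<longrightarrow> is_lub_on (\<subseteq>\<^sub>m) (CT ar Y) (h ` D) (h s))"

definition qr_family :: "('f \<Rightarrow> nat) \<Rightarrow> ('x set \<Rightarrow> ('f, 'x) tree set) \<Rightarrow> bool" where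
  "qr_family ar \<Delta> \<longleftrightarrow> (\<forall>X.
      \<Delta> X \<subseteq> CT ar X \<and> bot_tree \<in> \<Delta> X \<and>
      (\<forall>f ts. length ts = ar f \<and> set ts \<subseteq> \<Delta> X \<longrightarrow> node ar f ts \<in> \<Delta> X) \<and>
      leaf ` X \<subseteq> \<Delta> X)"

definition qr_pair :: "('f \<Rightarrow> nat) \<Rightarrow> ('x set \<Rightarrow> ('f, 'x) tree set) \<Rightarrow>
    ('y set \<Rightarrow> ('f, 'y) tree set) \<Rightarrow> bool" where
  "qr_pair ar \<Delta> \<Delta>' \<longleftrightarrow> (\<forall>X Y h. cont_morphism ar X Y h \<and> (\<forall>x\<in>X. h (leaf x) \<in> \<Delta>' Y)
       \<longrightarrow> h ` \<Delta> X \<subseteq> \<Delta>' Y)"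

text \<open>The quasi-regular family restricted to index sets of type 'a and of type
  ('f,'a) tree (all that the statement involves).\<close>
definition quasi_regular :: "('f \<Rightarrow> nat) \<Rightarrow> ('a set \<Rightarrow> ('f, 'a) tree set) \<Rightarrow>
    (('f, 'a) tree set \<Rightarrow> ('f, ('f, 'a) tree) tree set) \<Rightarrow> bool" where
  "quasi_regular ar \<Delta>1 \<Delta>2 \<longleftrightarrow> qr_family ar \<Delta>1 \<and> qr_family ar \<Delta>2 \<and>
     qr_pair ar \<Delta>1 \<Delta>1 \<and> qr_pair ar \<Delta>1 \<Delta>2 \<and> qr_pair ar \<Delta>2 \<Delta>1 \<and> qr_pair ar \<Delta>2 \<Delta>2"

definition eta :: "'x \<Rightarrow> ('f, 'x) tree" where
  "eta x = leaf x"

definition map_tree :: "('x \<Rightarrow> 'y) \<Rightarrow> ('f, 'x) tree \<Rightarrow> ('f, 'y) tree" where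
  "map_tree g t = (\<lambda>p. map_option (map_lab id g) (t p))"

text \<open>Flattening: at a position below a leaf labelled by a term s, read s.\<close>
definition mu :: "('f, ('f, 'x) tree) tree \<Rightarrow> ('f, 'x) tree" where
  "mu T = (\<lambda>p. if \<exists>q r s. p = q @ r \<and> T q = Some (Var s)
              then (SOME l. \<exists>q r s. p = q @ r \<and> T q = Some (Var s) \<and> l = s r)
              else (case T p of Some (Sym f) \<Rightarrow> Some (Sym f) | _ \<Rightarrow> None))"

definition ordered_algebra :: "('f \<Rightarrow> nat) \<Rightarrow> ('f \<Rightarrow> 'a::order_bot list \<Rightarrow> 'a) \<Rightarrow> bool" where
  "ordered_algebra ar I \<longleftrightarrow> (\<forall>f xs ys. length xs = ar f \<and> length ys = ar f \<and>
      (\<forall>i<ar f. xs ! i \<le> ys ! i) \<longrightarrow> I f xs \<le> I f ys)"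

definition subtree :: "('f, 'x) tree \<Rightarrow> nat list \<Rightarrow> ('f, 'x) tree" where
  "subtree t p = (\<lambda>q. t (p @ q))"

primrec eval_fuel :: "('f \<Rightarrow> nat) \<Rightarrow> ('f \<Rightarrow> 'a::order_bot list \<Rightarrow> 'a) \<Rightarrow> nat \<Rightarrow> ('f, 'a) tree \<Rightarrow> 'a" where
  "eval_fuel ar I 0 t = bot"
| "eval_fuel ar I (Suc n) t = (case t [] of None \<Rightarrow> bot
     | Some (Var a) \<Rightarrow> a
     | Some (Sym f) \<Rightarrow> I f (map (\<lambda>i. eval_fuel ar I n (subtree t [i])) [0..<ar f]))"

text \<open>beta on finite partial terms: evaluation (fuel exceeding the depth).\<close>
definition beta_fin :: "('f \<Rightarrow> nat) \<Rightarrow> ('f \<Rightarrow> 'a::order_bot list \<Rightarrow> 'a) \<Rightarrow> ('f, 'a) tree \<Rightarrow> 'a" where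
  "beta_fin ar I t = eval_fuel ar I (Suc (Max (length ` dom t))) t"

definition lubA :: "'a::order set \<Rightarrow> 'a" where
  "lubA B = (THE s. is_lub_on (\<le>) UNIV B s)"

definition delta_set :: "('f \<Rightarrow> nat) \<Rightarrow> ('f \<Rightarrow> 'a::order_bot list \<Rightarrow> 'a) \<Rightarrow>
    ('a set \<Rightarrow> ('f, 'a) tree set) \<Rightarrow> 'a set \<Rightarrow> bool" where
  "delta_set ar I \<Delta> B \<longleftrightarrow> (\<exists>t\<in>\<Delta> UNIV. B = {beta_fin ar I s | s. approx ar s t})"

definition delta_regular :: "('f \<Rightarrow> nat) \<Rightarrow> ('f \<Rightarrow> 'a::order_bot list \<Rightarrow> 'a) \<Rightarrow>
    ('a set \<Rightarrow> ('f, 'a) tree set) \<Rightarrow> bool" where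
  "delta_regular ar I \<Delta> \<longleftrightarrow> ordered_algebra ar I \<and>
     (\<forall>B. delta_set ar I \<Delta> B \<longrightarrow> (\<exists>s. is_lub_on (\<le>) UNIV B s)) \<and>
     (\<forall>f Bs. length Bs = ar f \<and> (\<forall>B\<in>set Bs. delta_set ar I \<Delta> B) \<longrightarrow>
        is_lub_on (\<le>) UNIV
          {I f bs | bs. length bs = ar f \<and> (\<forall>i<ar f. bs ! i \<in> Bs ! i)}
          (I f (map lubA Bs)))"

definition beta :: "('f \<Rightarrow> nat) \<Rightarrow> ('f \<Rightarrow> 'a::order_bot list \<Rightarrow> 'a) \<Rightarrow> ('f, 'a) tree \<Rightarrow> 'a" where
  "beta ar I t = lubA {beta_fin ar I s | s. approx ar s t}"

end

theory Submission
  imports Defs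
begin

text \<open>For a finite approximant \<open>c\<close> of a term of terms \<open>T\<close>, the flattening \<open>\<mu> c\<close> is built from
  finitely many terms of \<open>\<Delta> A\<close> by operations and \<open>\<bottom>\<close>; since the operations preserve suprema
  of \<open>\<Delta>\<close>-sets, induction on \<open>c\<close> shows that the approximant values of \<open>\<mu> c\<close> have supremum
  \<open>\<beta> (\<Delta>\<beta> c)\<close>. The finite approximants of \<open>\<Delta>\<beta> T\<close> are exactly the \<open>\<Delta>\<beta> c\<close>, and every finite
  approximant of \<open>\<mu> T\<close> lies below some \<open>\<mu> c\<close>; hence \<open>\<beta> (\<mu> T)\<close> and \<open>\<beta> (\<Delta>\<beta> T)\<close> are suprema
  of sets with the same upper bounds.\<close>

lemma wf_tree_prefix_Sym:
  assumes "wf_tree ar t" "t (q @ i # r) \<noteq> None"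
  shows "\<exists>f. t q = Some (Sym f) \<and> i < ar f"
  using assms(2)
proof (induction r rule: rev_induct)
  case Nil
  then show ?case using assms(1) unfolding wf_tree_def by simp
next
  case (snoc j r)
  have "t ((q @ i # r) @ [j]) \<noteq> None" using snoc.prems by simp
  then have "t (q @ i # r) \<noteq> None" using assms(1) unfolding wf_tree_def by blast
  then show ?case using snoc.IH by blast
qed

lemma wf_tree_below_Var:
  assumes "wf_tree ar t" "t q = Some (Var x)" "t (q @ r) \<noteq> None"
  shows "r = []"
proof (cases r)
  case (Cons i r')
  then show ?thesis using wf_tree_prefix_Sym[OF assms(1), of q i r'] assms(2,3) by auto
qed simp

lemma wf_tree_root_None: "wf_tree ar t \<Longrightarrow> t [] = None \<Longrightarrow> t = bot_tree"
proof (rule ext)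
  fix p assume w: "wf_tree ar t" and n: "t [] = None"
  show "t p = bot_tree p"
  proof (cases p)
    case (Cons i r)
    then show ?thesis using wf_tree_prefix_Sym[OF w, of "[]" i r] n
      by (cases "t (i # r)") (auto simp: bot_tree_def)
  qed (simp add: n bot_tree_def)
qed

lemma wf_tree_root_Var: "wf_tree ar t \<Longrightarrow> t [] = Some (Var x) \<Longrightarrow> t = leaf x"
proof (rule ext)
  fix p assume w: "wf_tree ar t" and n: "t [] = Some (Var x)"
  show "t p = leaf x p"
  proof (cases p)
    case (Cons i r)
    then show ?thesis using wf_tree_prefix_Sym[OF w, of "[]" i r] n
      by (cases "t (i # r)") (auto simp: leaf_def)
  qed (simp add: n leaf_def)
qed

lemma wf_tree_bot_tree: "wf_tree ar bot_tree"
  by (simp add: wf_tree_def bot_tree_def)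

lemma wf_tree_leaf: "wf_tree ar (leaf x)"
  by (simp add: wf_tree_def leaf_def)

lemma wf_tree_node:
  assumes "\<And>i. i < ar f \<Longrightarrow> wf_tree ar (ts ! i)"
  shows "wf_tree ar (node ar f ts)"
  unfolding wf_tree_def
proof (intro allI impI)
  fix p i assume h: "node ar f ts (p @ [i]) \<noteq> None"
  show "\<exists>g. node ar f ts p = Some (Sym g) \<and> i < ar g"
  proof (cases p)
    case Nil
    then show ?thesis using h by (auto simp: node_def split: if_splits)
  next
    case (Cons j p')
    then have j: "j < ar f" and t: "(ts ! j) (p' @ [i]) \<noteq> None"
      using h by (auto simp: node_def split: if_splits)
    then show ?thesis using assms[OF j] Cons unfolding wf_tree_def by (auto simp: node_def)
  qed
qed

lemma wf_tree_subtree: "wf_tree ar t \<Longrightarrow> wf_tree ar (subtree t p)"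
  unfolding wf_tree_def subtree_def by (metis append_assoc)

lemma finite_dom_subtree: "finite (dom t) \<Longrightarrow> finite (dom (subtree t p))"
proof -
  assume "finite (dom t)"
  moreover have "dom (subtree t p) = (\<lambda>q. p @ q) -` dom t" by (auto simp: subtree_def)
  ultimately show ?thesis by (simp add: finite_vimageI inj_on_def)
qed

lemma finite_dom_node:
  assumes "\<And>i. i < ar f \<Longrightarrow> finite (dom (ts ! i))"
  shows "finite (dom (node ar f ts))"
proof (rule finite_subset)
  show "dom (node ar f ts) \<subseteq> insert [] (\<Union>i<ar f. Cons i ` dom (ts ! i))"
  proof
    fix p assume "p \<in> dom (node ar f ts)"
    then show "p \<in> insert [] (\<Union>i<ar f. Cons i ` dom (ts ! i))"
      by (cases p) (force simp: node_def split: if_splits)+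
  qed
  show "finite (insert [] (\<Union>i<ar f. Cons i ` dom (ts ! i)))" using assms by simp
qed

lemma subtree_node: "i < ar f \<Longrightarrow> subtree (node ar f ts) [i] = ts ! i"
  by (auto simp: subtree_def node_def)

lemma dom_map_tree: "dom (map_tree g t) = dom t"
  by (auto simp: map_tree_def)

lemma map_tree_eq_Sym_iff: "map_tree g t p = Some (Sym f) \<longleftrightarrow> t p = Some (Sym f)"
proof (cases "t p")
  case (Some l) then show ?thesis by (cases l) (auto simp: map_tree_def)
qed (simp add: map_tree_def)

lemma wf_tree_map_tree: "wf_tree ar (map_tree g t) \<longleftrightarrow> wf_tree ar t"
  unfolding wf_tree_def by (simp add: map_tree_eq_Sym_iff) (simp add: map_tree_def)

lemma subtree_map_tree: "subtree (map_tree g t) p = map_tree g (subtree t p)"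
  by (simp add: subtree_def map_tree_def)

lemma map_leI: "(\<And>p v. m1 p = Some v \<Longrightarrow> m2 p = Some v) \<Longrightarrow> m1 \<subseteq>\<^sub>m m2"
  by (auto simp: map_le_def dom_def)

lemma map_leD: "m1 \<subseteq>\<^sub>m m2 \<Longrightarrow> m1 p = Some v \<Longrightarrow> m2 p = Some v"
  by (auto simp: map_le_def dom_def)

lemma approx_map_tree: "approx ar c t \<Longrightarrow> approx ar (map_tree g c) (map_tree g t)"
  unfolding approx_def wf_tree_map_tree dom_map_tree
  by (auto simp: map_le_def map_tree_def dom_def)

lemma eval_fuel_indep:
  "\<forall>p\<in>dom t. length p < m \<Longrightarrow> m \<le> k \<Longrightarrow> eval_fuel ar I m t = eval_fuel ar I k t"
proof (induction m arbitrary: t k)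
  case 0
  then have "t [] = None" by fastforce
  then show ?case by (cases k) auto
next
  case (Suc m)
  then obtain k' where k: "k = Suc k'" "m \<le> k'" by (cases k) auto
  have "eval_fuel ar I m (subtree t [i]) = eval_fuel ar I k' (subtree t [i])" for i
    using Suc.prems(1) k(2) by (intro Suc.IH) (auto simp: subtree_def dom_def)
  then show ?case using k(1) by (simp split: option.split lab.split)
qed

lemma beta_fin_eq_eval_fuel:
  assumes "finite (dom t)" "\<forall>p\<in>dom t. length p < n"
  shows "beta_fin ar I t = eval_fuel ar I n t"
proof (cases "dom t = {}")
  case True
  then have "t [] = None" by auto
  then show ?thesis by (cases n) (auto simp: beta_fin_def)
next
  case False
  define M where "M = Max (length ` dom t)"
  have "M \<in> length ` dom t" using False assms(1) unfolding M_def by (intro Max_in) auto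
  then have "Suc M \<le> n" using assms(2) by (auto simp: Suc_le_eq)
  moreover have "\<forall>p\<in>dom t. length p < Suc M" using assms(1) unfolding M_def
    by (simp add: le_imp_less_Suc)
  ultimately show ?thesis unfolding beta_fin_def M_def[symmetric]
    using eval_fuel_indep by blast
qed

lemma beta_fin_root_None: "t [] = None \<Longrightarrow> beta_fin ar I t = bot"
  by (simp add: beta_fin_def)

lemma beta_fin_root_Var: "t [] = Some (Var a) \<Longrightarrow> beta_fin ar I t = a"
  by (simp add: beta_fin_def)

lemma beta_fin_root_Sym:
  assumes "finite (dom t)" "t [] = Some (Sym f)"
  shows "beta_fin ar I t = I f (map (\<lambda>i. beta_fin ar I (subtree t [i])) [0..<ar f])"
proof -
  define M where "M = Max (length ` dom t)"
  have "eval_fuel ar I M (subtree t [i]) = beta_fin ar I (subtree t [i])" for i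
  proof (rule beta_fin_eq_eval_fuel[symmetric])
    show "finite (dom (subtree t [i]))" using assms(1) by (rule finite_dom_subtree)
    show "\<forall>p\<in>dom (subtree t [i]). length p < M"
    proof
      fix p assume "p \<in> dom (subtree t [i])"
      then have "i # p \<in> dom t" by (auto simp: subtree_def)
      then have "length (i # p) \<le> M" unfolding M_def using assms(1) by (intro Max_ge) blast+
      then show "length p < M" by simp
    qed
  qed
  moreover have "beta_fin ar I t = eval_fuel ar I (Suc M) t" by (simp only: beta_fin_def M_def)
  ultimately show ?thesis using assms(2) by simp
qed

lemma mu_below_Var:
  assumes w: "wf_tree ar T" and v: "T q = Some (Var s)"
  shows "mu T (q @ r) = s r"
proof -
  have "(SOME l. \<exists>q' r' s'. q @ r = q' @ r' \<and> T q' = Some (Var s') \<and> l = s' r') = s r"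
  proof (rule some_equality)
    fix l assume "\<exists>q' r' s'. q @ r = q' @ r' \<and> T q' = Some (Var s') \<and> l = s' r'"
    then obtain q' r' s' where h: "q @ r = q' @ r'" "T q' = Some (Var s')" "l = s' r'" by blast
    from h(1) obtain us where "q = q' @ us \<and> us @ r = r' \<or> q @ us = q' \<and> r = us @ r'"
      by (auto simp: append_eq_append_conv2)
    then show "l = s r"
    proof
      assume a: "q = q' @ us \<and> us @ r = r'"
      then have "us = []" using wf_tree_below_Var[OF w h(2), of us] v by auto
      then show ?thesis using a h v by auto
    next
      assume a: "q @ us = q' \<and> r = us @ r'"
      then have "us = []" using wf_tree_below_Var[OF w v, of us] h by auto
      then show ?thesis using a h v by auto
    qed
  qed (use v in blast)
  moreover have "\<exists>q' r' s'. q @ r = q' @ r' \<and> T q' = Some (Var s')" using v by blast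
  ultimately show ?thesis by (simp add: mu_def)
qed

lemma mu_not_below_Var:
  "\<not> (\<exists>q r s. p = q @ r \<and> T q = Some (Var s)) \<Longrightarrow>
   mu T p = (case T p of Some (Sym f) \<Rightarrow> Some (Sym f) | _ \<Rightarrow> None)"
  unfolding mu_def by (rule if_not_P)

lemma mu_Sym:
  assumes w: "wf_tree ar T" and s: "T p = Some (Sym f)"
  shows "mu T p = Some (Sym f)"
proof -
  have nv: "\<not> (\<exists>q r s. p = q @ r \<and> T q = Some (Var s))"
  proof
    assume "\<exists>q r s. p = q @ r \<and> T q = Some (Var s)"
    then obtain q r s' where h: "p = q @ r" "T q = Some (Var s')" by blast
    then have "r = []" using wf_tree_below_Var[OF w h(2), of r] s by auto
    then show False using h s by auto
  qed
  show ?thesis using mu_not_below_Var[OF nv] s by simp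
qed

lemma mu_SomeE:
  assumes "mu T p = Some v"
  obtains q r s where "p = q @ r" "T q = Some (Var s)" | f where "T p = Some (Sym f)" "v = Sym f"
proof (cases "\<exists>q r s. p = q @ r \<and> T q = Some (Var s)")
  case False
  then show ?thesis using that assms mu_not_below_Var[OF False]
    by (auto split: option.splits lab.splits)
qed (use that in blast)

lemma mu_bot_tree: "mu bot_tree = bot_tree"
  by (rule ext) (simp add: mu_def bot_tree_def)

lemma mu_leaf: "mu (leaf s) = s"
  by (rule ext) (metis append_Nil mu_below_Var[OF wf_tree_leaf] leaf_def)

lemma mu_Cons:
  assumes w: "wf_tree ar c" and r: "c [] = Some (Sym f)"
  shows "mu c (i # q) = (if i < ar f then mu (subtree c [i]) q else None)"
proof (cases "\<exists>q' r s. q = q' @ r \<and> subtree c [i] q' = Some (Var s)")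
  case True
  then obtain q' r s where h: "q = q' @ r" "subtree c [i] q' = Some (Var s)" by blast
  then have c: "c (i # q') = Some (Var s)" by (simp add: subtree_def)
  then have "i < ar f" using wf_tree_prefix_Sym[OF w, of "[]" i q'] r by auto
  then show ?thesis
    using mu_below_Var[OF w c, of r] mu_below_Var[OF wf_tree_subtree[OF w] h(2), of r] h(1) by simp
next
  case False
  have nv: "\<not> (\<exists>q'' r s. i # q = q'' @ r \<and> c q'' = Some (Var s))"
  proof
    assume "\<exists>q'' r s. i # q = q'' @ r \<and> c q'' = Some (Var s)"
    then obtain q'' r s where h: "i # q = q'' @ r" "c q'' = Some (Var s)" by blast
    then show False using r False by (cases q'') (auto simp: subtree_def)
  qed
  show ?thesis
  proof (cases "i < ar f")
    case True
    then show ?thesis using mu_not_below_Var[OF nv] mu_not_below_Var[OF False] by (simp add: subtree_def)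
  next
    case False
    then have "c (i # q) = None" using wf_tree_prefix_Sym[OF w, of "[]" i q] r
      by (cases "c (i # q)") auto
    then show ?thesis using mu_not_below_Var[OF nv] False by simp
  qed
qed

lemma mu_root_Sym:
  assumes w: "wf_tree ar c" and r: "c [] = Some (Sym f)"
  shows "mu c = node ar f (map (\<lambda>i. mu (subtree c [i])) [0..<ar f])"
proof (rule ext)
  fix p show "mu c p = node ar f (map (\<lambda>i. mu (subtree c [i])) [0..<ar f]) p"
    by (cases p) (auto simp: node_def mu_Sym[OF w r] mu_Cons[OF w r])
qed

lemma mu_mono:
  assumes wT: "wf_tree ar T" and wc: "wf_tree ar c" and le: "c \<subseteq>\<^sub>m T"
  shows "mu c \<subseteq>\<^sub>m mu T"
proof (rule map_leI)
  fix p v assume h: "mu c p = Some v"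
  then show "mu T p = Some v"
  proof (cases rule: mu_SomeE)
    case (1 q r s)
    have "T q = Some (Var s)" using le 1(2) by (rule map_leD)
    then have "mu T p = s r" unfolding \<open>p = q @ r\<close> by (rule mu_below_Var[OF wT])
    moreover have "mu c p = s r" unfolding \<open>p = q @ r\<close> using wc 1(2) by (rule mu_below_Var)
    ultimately show ?thesis using h by simp
  next
    case (2 f)
    then show ?thesis using mu_Sym[OF wT map_leD[OF le 2(1)]] by simp
  qed
qed

definition approx_values :: "('f \<Rightarrow> nat) \<Rightarrow> ('f \<Rightarrow> 'a::order_bot list \<Rightarrow> 'a) \<Rightarrow> ('f, 'a) tree \<Rightarrow> 'a set" where
  "approx_values ar I t = {beta_fin ar I s | s. approx ar s t}"

lemma beta_eq_lubA_approx_values: "beta ar I t = lubA (approx_values ar I t)"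
  by (simp add: beta_def approx_values_def)

lemma delta_set_approx_values: "t \<in> \<Delta> UNIV \<Longrightarrow> delta_set ar I \<Delta> (approx_values ar I t)"
  by (auto simp: delta_set_def approx_values_def)

lemma approx_values_mono: "t \<subseteq>\<^sub>m t' \<Longrightarrow> approx_values ar I t \<subseteq> approx_values ar I t'"
  by (auto simp: approx_values_def approx_def intro: map_le_trans)

lemma lubA_eqI: "is_lub_on (\<le>) UNIV B (x::'a::order) \<Longrightarrow> lubA B = x"
  unfolding lubA_def by (rule the_equality) (auto simp: is_lub_on_def intro: order.antisym)

lemma lubA_cong:
  assumes "\<And>y. (\<forall>b\<in>A. b \<le> y) \<longleftrightarrow> (\<forall>b\<in>B. b \<le> (y::'a::order))"
  shows "lubA A = lubA B"
proof -
  have "is_lub_on (\<le>) UNIV A = is_lub_on (\<le>) UNIV B"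
    by (rule ext) (simp add: is_lub_on_def assms)
  then show ?thesis by (simp add: lubA_def)
qed

lemma is_lub_on_insert_bot:
  "is_lub_on (\<le>) UNIV B (x::'a::order_bot) \<Longrightarrow> is_lub_on (\<le>) UNIV (insert bot B) x"
  by (auto simp: is_lub_on_def)

lemma approx_bot_tree_iff: "approx ar s bot_tree \<longleftrightarrow> s = bot_tree"
  by (auto simp: approx_def bot_tree_def map_le_def wf_tree_def)

lemma approx_bot_tree: "approx ar bot_tree t"
  by (simp add: approx_def wf_tree_bot_tree) (simp add: bot_tree_def map_le_def)

lemma approx_values_bot_tree: "approx_values ar I bot_tree = {bot}"
  unfolding approx_values_def approx_bot_tree_iff by (simp add: beta_fin_root_None bot_tree_def)

lemma approx_leaf_iff: "approx ar s (leaf x) \<longleftrightarrow> s = bot_tree \<or> s = leaf x"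
proof
  assume "approx ar s (leaf x)"
  then have w: "wf_tree ar s" and l: "s \<subseteq>\<^sub>m leaf x" by (auto simp: approx_def)
  show "s = bot_tree \<or> s = leaf x"
  proof (cases "s []")
    case None then show ?thesis using wf_tree_root_None[OF w] by blast
  next
    case (Some l')
    then have "s [] = Some (Var x)" using l by (auto simp: map_le_def dom_def leaf_def)
    then show ?thesis using wf_tree_root_Var[OF w] by blast
  qed
next
  have "finite (dom (leaf x))" by (simp add: leaf_def dom_if)
  then have "approx ar (leaf x) (leaf x)" by (simp add: approx_def wf_tree_leaf)
  moreover assume "s = bot_tree \<or> s = leaf x"
  ultimately show "approx ar s (leaf x)" using approx_bot_tree by blast
qed

lemma approx_values_leaf: "approx_values ar I (leaf a) = {bot, a}"
proof -
  have "approx_values ar I (leaf a) = {beta_fin ar I bot_tree, beta_fin ar I (leaf a)}"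
    by (auto simp: approx_values_def approx_leaf_iff)
  moreover have "beta_fin ar I bot_tree = bot" by (simp add: beta_fin_root_None bot_tree_def)
  moreover have "beta_fin ar I (leaf a) = a" by (simp add: beta_fin_root_Var leaf_def)
  ultimately show ?thesis by simp
qed

lemma approx_node:
  assumes "\<And>i. i < ar f \<Longrightarrow> approx ar (zs ! i) (ws ! i)"
  shows "approx ar (node ar f zs) (node ar f ws)"
  unfolding approx_def
proof (intro conjI)
  show "wf_tree ar (node ar f zs)" using assms by (intro wf_tree_node) (simp add: approx_def)
  show "finite (dom (node ar f zs))" using assms by (intro finite_dom_node) (simp add: approx_def)
  show "node ar f zs \<subseteq>\<^sub>m node ar f ws"
  proof (rule map_leI)
    fix p v assume "node ar f zs p = Some v"
    then show "node ar f ws p = Some v"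
      using assms by (cases p) (auto simp: node_def approx_def map_le_def dom_def split: if_splits)
  qed
qed

lemma approx_nodeD:
  assumes "approx ar s (node ar f ws)" "s [] \<noteq> None"
  shows "s [] = Some (Sym f)" "i < ar f \<Longrightarrow> approx ar (subtree s [i]) (ws ! i)"
proof -
  have le: "s \<subseteq>\<^sub>m node ar f ws" using assms(1) by (simp add: approx_def)
  then show "s [] = Some (Sym f)" using assms(2) by (auto simp: map_le_def node_def dom_def)
  assume i: "i < ar f"
  have "subtree s [i] \<subseteq>\<^sub>m ws ! i"
  proof (rule map_leI)
    fix q v assume "subtree s [i] q = Some v"
    then have "node ar f ws (i # q) = Some v" using le by (simp add: subtree_def map_leD)
    then show "(ws ! i) q = Some v" using i by (simp add: node_def)
  qed
  then show "approx ar (subtree s [i]) (ws ! i)"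
    using assms(1) by (simp add: approx_def wf_tree_subtree finite_dom_subtree)
qed

lemma beta_fin_node:
  assumes "length zs = ar f" "\<And>i. i < ar f \<Longrightarrow> finite (dom (zs ! i))"
  shows "beta_fin ar I (node ar f zs) = I f (map (beta_fin ar I) zs)"
proof -
  have "node ar f zs [] = Some (Sym f)" by (simp add: node_def)
  with beta_fin_root_Sym[of "node ar f zs" f ar I] finite_dom_node[of ar f zs, OF assms(2)]
  have "beta_fin ar I (node ar f zs) =
      I f (map (\<lambda>i. beta_fin ar I (subtree (node ar f zs) [i])) [0..<ar f])" by blast
  also have "map (\<lambda>i. beta_fin ar I (subtree (node ar f zs) [i])) [0..<ar f] = map (beta_fin ar I) zs"
    using assms(1) by (intro nth_equalityI) (simp_all add: subtree_node)
  finally show ?thesis .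
qed

lemma approx_values_node:
  assumes "length ws = ar f"
  shows "approx_values ar I (node ar f ws) =
    insert bot {I f bs | bs. length bs = ar f \<and> (\<forall>i<ar f. bs ! i \<in> approx_values ar I (ws ! i))}"
    (is "_ = insert bot ?V")
proof (intro set_eqI iffI)
  fix x assume "x \<in> approx_values ar I (node ar f ws)"
  then obtain s where x: "x = beta_fin ar I s" and a: "approx ar s (node ar f ws)"
    by (auto simp: approx_values_def)
  show "x \<in> insert bot ?V"
  proof (cases "s []")
    case None then show ?thesis using x beta_fin_root_None by auto
  next
    case (Some l)
    then have r: "s [] = Some (Sym f)" using approx_nodeD(1)[OF a] by simp
    have "finite (dom s)" using a by (simp add: approx_def)
    then have "x = I f (map (\<lambda>i. beta_fin ar I (subtree s [i])) [0..<ar f])"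
      using beta_fin_root_Sym[of s f ar I] r x by blast
    moreover have "beta_fin ar I (subtree s [i]) \<in> approx_values ar I (ws ! i)" if "i < ar f" for i
      using approx_nodeD(2)[OF a _ that] Some by (auto simp: approx_values_def)
    ultimately have "x \<in> ?V"
      by (intro CollectI exI[of _ "map (\<lambda>i. beta_fin ar I (subtree s [i])) [0..<ar f]"]) auto
    then show ?thesis by blast
  qed
next
  fix x assume "x \<in> insert bot ?V"
  then show "x \<in> approx_values ar I (node ar f ws)"
  proof
    have "beta_fin ar I bot_tree \<in> approx_values ar I (node ar f ws)"
      unfolding approx_values_def using approx_bot_tree by blast
    moreover assume "x = bot"
    ultimately show ?thesis by (simp add: beta_fin_root_None bot_tree_def)
  next
    assume "x \<in> ?V"
    then obtain bs where x: "x = I f bs" and lb: "length bs = ar f"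
      and bs: "\<forall>i<ar f. bs ! i \<in> approx_values ar I (ws ! i)" by blast
    have "\<forall>i<ar f. \<exists>s. approx ar s (ws ! i) \<and> bs ! i = beta_fin ar I s"
      using bs by (auto simp: approx_values_def)
    then obtain z where z: "\<And>i. i < ar f \<Longrightarrow> approx ar (z i) (ws ! i) \<and> bs ! i = beta_fin ar I (z i)"
      by metis
    define zs where "zs = map z [0..<ar f]"
    have "approx ar (node ar f zs) (node ar f ws)" using z by (intro approx_node) (simp add: zs_def)
    moreover have "beta_fin ar I (node ar f zs) = I f (map (beta_fin ar I) zs)"
      using z by (intro beta_fin_node) (auto simp: zs_def approx_def)
    moreover have "map (beta_fin ar I) zs = bs"
      using z lb by (intro nth_equalityI) (auto simp: zs_def)
    ultimately show ?thesis unfolding approx_values_def using x by (metis (mono_tags, lifting) mem_Collect_eq)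
  qed
qed

lemma is_lub_on_beta:
  assumes "delta_regular ar I \<Delta>" "t \<in> \<Delta> UNIV"
  shows "is_lub_on (\<le>) UNIV (approx_values ar I t) (beta ar I t)"
proof -
  obtain x where "is_lub_on (\<le>) UNIV (approx_values ar I t) x"
    using assms delta_set_approx_values unfolding delta_regular_def by blast
  then have "lubA (approx_values ar I t) = x" by (rule lubA_eqI)
  with \<open>is_lub_on _ _ _ x\<close> show ?thesis by (simp add: beta_eq_lubA_approx_values)
qed

lemma is_lub_on_approx_values_node:
  assumes DR: "delta_regular ar I \<Delta>"
    and ws: "length ws = ar f" "set ws \<subseteq> \<Delta> UNIV"
    and xs: "length xs = ar f" "\<And>i. i < ar f \<Longrightarrow> is_lub_on (\<le>) UNIV (approx_values ar I (ws ! i)) (xs ! i)"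
  shows "is_lub_on (\<le>) UNIV (approx_values ar I (node ar f ws)) (I f xs)"
proof -
  define Bs where "Bs = map (approx_values ar I) ws"
  have "length Bs = ar f \<and> (\<forall>B\<in>set Bs. delta_set ar I \<Delta> B)"
    using ws by (auto simp: Bs_def intro: delta_set_approx_values)
  then have "is_lub_on (\<le>) UNIV {I f bs | bs. length bs = ar f \<and> (\<forall>i<ar f. bs ! i \<in> Bs ! i)}
      (I f (map lubA Bs))"
    using DR unfolding delta_regular_def by blast
  moreover have "map lubA Bs = xs"
    using ws xs lubA_eqI by (intro nth_equalityI) (auto simp: Bs_def)
  ultimately show ?thesis
    using approx_values_node[of ws ar f I, OF ws(1)] is_lub_on_insert_bot ws(1) by (simp add: Bs_def)
qed

text \<open>The bound \<open>n\<close> on the depth of \<open>c\<close> only serves as the induction variable.\<close>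
lemma is_lub_on_approx_values_mu_finite:
  assumes QR: "qr_family ar \<Delta>" and DR: "delta_regular ar I \<Delta>"
  shows "wf_tree ar c \<Longrightarrow> finite (dom c) \<Longrightarrow> (\<forall>p s. c p = Some (Var s) \<longrightarrow> s \<in> \<Delta> UNIV) \<Longrightarrow>
    (\<forall>p\<in>dom c. length p < n) \<Longrightarrow>
    mu c \<in> \<Delta> UNIV \<and>
    is_lub_on (\<le>) UNIV (approx_values ar I (mu c)) (beta_fin ar I (map_tree (beta ar I) c))"
proof (induction n arbitrary: c)
  have bot: "mu bot_tree \<in> \<Delta> UNIV \<and>
    is_lub_on (\<le>) UNIV (approx_values ar I (mu bot_tree)) (beta_fin ar I (map_tree (beta ar I) bot_tree))"
  proof -
    have "bot_tree \<in> \<Delta> UNIV" using QR by (simp add: qr_family_def)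
    moreover have "beta_fin ar I (map_tree (beta ar I) bot_tree) = bot"
      by (simp add: beta_fin_root_None map_tree_def bot_tree_def)
    ultimately show ?thesis by (simp add: mu_bot_tree approx_values_bot_tree is_lub_on_def)
  qed
  {
    case (0 c)
    then have "c [] = None" by fastforce
    then show ?case using bot wf_tree_root_None "0.prems"(1) by blast
  next
    case (Suc n c)
    consider "c [] = None" | s where "c [] = Some (Var s)" | f where "c [] = Some (Sym f)"
      by (metis lab.exhaust not_None_eq)
    then show ?case
    proof cases
      case 1
      then show ?thesis using bot wf_tree_root_None Suc.prems(1) by blast
    next
      case (2 s)
      have "c = leaf s" using wf_tree_root_Var[OF Suc.prems(1) 2] .
      moreover have "s \<in> \<Delta> UNIV" using Suc.prems(3) 2 by blast
      moreover have "beta_fin ar I (map_tree (beta ar I) (leaf s)) = beta ar I s"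
        by (simp add: beta_fin_root_Var map_tree_def leaf_def)
      ultimately show ?thesis using is_lub_on_beta[OF DR, of s] by (simp add: mu_leaf)
    next
      case (3 f)
      define ws where "ws = map (\<lambda>i. mu (subtree c [i])) [0..<ar f]"
      define xs where "xs = map (\<lambda>i. beta_fin ar I (map_tree (beta ar I) (subtree c [i]))) [0..<ar f]"
      have IH: "mu (subtree c [i]) \<in> \<Delta> UNIV \<and> is_lub_on (\<le>) UNIV (approx_values ar I (mu (subtree c [i])))
          (beta_fin ar I (map_tree (beta ar I) (subtree c [i])))" for i
      proof (rule Suc.IH)
        show "wf_tree ar (subtree c [i])" using Suc.prems(1) by (rule wf_tree_subtree)
        show "finite (dom (subtree c [i]))" using Suc.prems(2) by (rule finite_dom_subtree)
        show "\<forall>p s. subtree c [i] p = Some (Var s) \<longrightarrow> s \<in> \<Delta> UNIV"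
          using Suc.prems(3) by (simp add: subtree_def)
        show "\<forall>p\<in>dom (subtree c [i]). length p < n"
          using Suc.prems(4) by (auto simp: subtree_def dom_def)
      qed
      have mu_c: "mu c = node ar f ws" using mu_root_Sym[OF Suc.prems(1) 3] by (simp add: ws_def)
      have ws: "length ws = ar f" "set ws \<subseteq> \<Delta> UNIV" using IH by (auto simp: ws_def)
      then have "mu c \<in> \<Delta> UNIV" using QR mu_c by (simp add: qr_family_def)
      moreover have "is_lub_on (\<le>) UNIV (approx_values ar I (mu c)) (I f xs)"
        unfolding mu_c using DR ws IH by (intro is_lub_on_approx_values_node) (auto simp: ws_def xs_def)
      moreover have "beta_fin ar I (map_tree (beta ar I) c) = I f xs"
        using Suc.prems(2) 3 by (subst beta_fin_root_Sym)
          (simp_all add: dom_map_tree map_tree_eq_Sym_iff subtree_map_tree xs_def)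
      ultimately show ?thesis by simp
    qed
  }
qed

lemma approx_map_treeE:
  assumes wT: "wf_tree ar T" and u: "approx ar u (map_tree g T)"
  obtains c where "approx ar c T" "u = map_tree g c"
proof
  have wu: "wf_tree ar u" and fu: "finite (dom u)" and lu: "u \<subseteq>\<^sub>m map_tree g T"
    using u by (auto simp: approx_def)
  define c where "c = (\<lambda>p. if p \<in> dom u then T p else None)"
  have "wf_tree ar c" unfolding wf_tree_def
  proof (intro allI impI)
    fix p i assume "c (p @ [i]) \<noteq> None"
    then have "p @ [i] \<in> dom u" "T (p @ [i]) \<noteq> None" by (auto simp: c_def split: if_splits)
    then have "p \<in> dom u" "\<exists>f. T p = Some (Sym f) \<and> i < ar f"
      using wu wT unfolding wf_tree_def by blast+
    then show "\<exists>f. c p = Some (Sym f) \<and> i < ar f" by (simp add: c_def)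
  qed
  moreover have "finite (dom c)" using fu by (rule rev_finite_subset) (auto simp: c_def split: if_splits)
  moreover have "c \<subseteq>\<^sub>m T" by (auto simp: c_def map_le_def dom_def)
  ultimately show "approx ar c T" by (simp add: approx_def)
  show "u = map_tree g c"
  proof
    fix p show "u p = map_tree g c p"
      using lu by (cases "p \<in> dom u") (auto simp: c_def map_tree_def map_le_def)
  qed
qed

lemma finite_prefixes: "finite D \<Longrightarrow> finite {q. \<exists>p\<in>D. \<exists>r. p = q @ r}"
proof (rule finite_subset)
  show "{q. \<exists>p\<in>D. \<exists>r. p = q @ r} \<subseteq> (\<Union>p\<in>D. (\<lambda>k. take k p) ` {..length p})"
  proof
    fix q assume "q \<in> {q. \<exists>p\<in>D. \<exists>r. p = q @ r}"
    then obtain p r where "p \<in> D" "p = q @ r" by blast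
    then show "q \<in> (\<Union>p\<in>D. (\<lambda>k. take k p) ` {..length p})"
      by (intro UN_I[of p]) (auto intro!: image_eqI[of _ _ "length q"])
  qed
qed simp

text \<open>The witness \<open>c\<close> is \<open>T\<close> cut down to the prefixes of positions of \<open>z\<close>: a position of
  \<open>z\<close> below a leaf of \<open>T\<close> keeps that leaf, and all other positions of \<open>z\<close> carry symbols of \<open>T\<close>.\<close>
lemma approx_muE:
  assumes wT: "wf_tree ar T" and z: "approx ar z (mu T)"
  obtains c where "approx ar c T" "z \<subseteq>\<^sub>m mu c"
proof
  have fz: "finite (dom z)" and lz: "z \<subseteq>\<^sub>m mu T" using z by (auto simp: approx_def)
  define P where "P = {q. \<exists>p\<in>dom z. \<exists>r. p = q @ r}"
  define c where "c = (\<lambda>q. if q \<in> P then T q else None)"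
  have wc: "wf_tree ar c" unfolding wf_tree_def
  proof (intro allI impI)
    fix p i assume "c (p @ [i]) \<noteq> None"
    then have "p @ [i] \<in> P" and Ti: "T (p @ [i]) \<noteq> None" by (auto simp: c_def split: if_splits)
    then obtain p' r where "p' \<in> dom z" "p' = p @ i # r" unfolding P_def by auto
    then have "p \<in> P" unfolding P_def by blast
    moreover have "\<exists>f. T p = Some (Sym f) \<and> i < ar f" using wT Ti unfolding wf_tree_def by blast
    ultimately show "\<exists>f. c p = Some (Sym f) \<and> i < ar f" by (simp add: c_def)
  qed
  moreover have "finite (dom c)"
    using finite_prefixes[OF fz] by (rule rev_finite_subset) (auto simp: c_def P_def split: if_splits)
  moreover have "c \<subseteq>\<^sub>m T" by (auto simp: c_def map_le_def dom_def)
  ultimately show "approx ar c T" by (simp add: approx_def)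
  show "z \<subseteq>\<^sub>m mu c"
  proof (rule map_leI)
    fix p v assume zp: "z p = Some v"
    have "p \<in> P" unfolding P_def using zp by (blast intro: append_Nil2[symmetric])
    have mT: "mu T p = Some v" using lz zp by (rule map_leD)
    then show "mu c p = Some v"
    proof (cases rule: mu_SomeE)
      case (1 q r s)
      have "q \<in> P" unfolding P_def using zp 1(1) by blast
      then have "c q = Some (Var s)" by (simp add: c_def 1(2))
      then have "mu c p = s r" unfolding \<open>p = q @ r\<close> by (rule mu_below_Var[OF wc])
      moreover have "mu T p = s r" unfolding \<open>p = q @ r\<close> using wT 1(2) by (rule mu_below_Var)
      ultimately show ?thesis using mT by simp
    next
      case (2 f)
      then have "c p = Some (Sym f)" using \<open>p \<in> P\<close> by (simp add: c_def)
      then show ?thesis using mu_Sym[OF wc] 2 by simp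
    qed
  qed
qed

lemma beta_eta: "beta ar I (eta a) = a"
proof -
  have "is_lub_on (\<le>) UNIV {bot, a} a" by (auto simp: is_lub_on_def)
  then show ?thesis unfolding beta_eq_lubA_approx_values eta_def approx_values_leaf by (rule lubA_eqI)
qed

lemma beta_mu:
  assumes QR: "qr_family ar \<Delta>" and DR: "delta_regular ar I \<Delta>"
    and wT: "wf_tree ar T" and leaves: "\<forall>p s. T p = Some (Var s) \<longrightarrow> s \<in> \<Delta> UNIV"
  shows "beta ar I (mu T) = beta ar I (map_tree (beta ar I) T)"
proof -
  let ?g = "beta ar I"
  have lub: "is_lub_on (\<le>) UNIV (approx_values ar I (mu c)) (beta_fin ar I (map_tree ?g c))"
    if c: "approx ar c T" for c
  proof -
    have "finite (dom c)" using c by (simp add: approx_def)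
    then obtain n where "\<forall>p\<in>dom c. length p < n"
      using finite_nat_set_iff_bounded[of "length ` dom c"] by auto
    moreover have "\<forall>p s. c p = Some (Var s) \<longrightarrow> s \<in> \<Delta> UNIV"
      using c leaves by (auto simp: approx_def dest: map_leD)
    ultimately show ?thesis using is_lub_on_approx_values_mu_finite[OF QR DR] c by (simp add: approx_def)
  qed
  have "(\<forall>b\<in>approx_values ar I (mu T). b \<le> y) \<longleftrightarrow> (\<forall>b\<in>approx_values ar I (map_tree ?g T). b \<le> y)"
    for y
  proof (intro iffI ballI)
    fix b assume H: "\<forall>b\<in>approx_values ar I (mu T). b \<le> y"
      and "b \<in> approx_values ar I (map_tree ?g T)"
    then obtain u where b: "b = beta_fin ar I u" and u: "approx ar u (map_tree ?g T)"
      by (auto simp: approx_values_def)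
    obtain c where c: "approx ar c T" and u_c: "u = map_tree ?g c"
      using approx_map_treeE[OF wT u] .
    have "mu c \<subseteq>\<^sub>m mu T" using c wT by (intro mu_mono) (auto simp: approx_def)
    then have "\<forall>b\<in>approx_values ar I (mu c). b \<le> y" using H approx_values_mono by blast
    then show "b \<le> y" using lub[OF c] b u_c by (auto simp: is_lub_on_def)
  next
    fix b assume H: "\<forall>b\<in>approx_values ar I (map_tree ?g T). b \<le> y"
      and "b \<in> approx_values ar I (mu T)"
    then obtain z where b: "b = beta_fin ar I z" and z: "approx ar z (mu T)"
      by (auto simp: approx_values_def)
    obtain c where c: "approx ar c T" and z_c: "z \<subseteq>\<^sub>m mu c"
      using approx_muE[OF wT z] .
    have "b \<in> approx_values ar I (mu c)" using z z_c b by (auto simp: approx_values_def approx_def)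
    then have "b \<le> beta_fin ar I (map_tree ?g c)" using lub[OF c] by (auto simp: is_lub_on_def)
    also have "\<dots> \<le> y" using H approx_map_tree[OF c] by (auto simp: approx_values_def)
    finally show "b \<le> y" .
  qed
  then show ?thesis unfolding beta_eq_lubA_approx_values by (rule lubA_cong)
qed

theorem mainTheorem2:
  fixes ar :: "'f \<Rightarrow> nat"
    and I :: "'f \<Rightarrow> 'a::order_bot list \<Rightarrow> 'a"
    and \<Delta>1 :: "'a set \<Rightarrow> ('f, 'a) tree set"
    and \<Delta>2 :: "('f, 'a) tree set \<Rightarrow> ('f, ('f, 'a) tree) tree set"
  assumes "quasi_regular ar \<Delta>1 \<Delta>2"
    and "delta_regular ar I \<Delta>1"
  shows "(\<forall>a. beta ar I (eta a) = a) \<and>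
         (\<forall>T\<in>\<Delta>2 (\<Delta>1 UNIV). beta ar I (mu T) = beta ar I (map_tree (beta ar I) T))"
proof (intro conjI allI ballI)
  fix a show "beta ar I (eta a) = a" by (rule beta_eta)
next
  have QR1: "qr_family ar \<Delta>1" and QR2: "qr_family ar \<Delta>2"
    using assms(1) by (auto simp: quasi_regular_def)
  fix T assume "T \<in> \<Delta>2 (\<Delta>1 UNIV)"
  then have "T \<in> CT ar (\<Delta>1 UNIV)" using QR2 by (auto simp: qr_family_def)
  then show "beta ar I (mu T) = beta ar I (map_tree (beta ar I) T)"
    using beta_mu[OF QR1 assms(2)] by (simp add: CT_def)
qed

end
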